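(* Let $0<q<1$, $\alpha>-1$ and let $n\ge0$ be an integer. The matrix $\left((q^{\alpha+1};q)_{j+k}\,q^{-\binom{j+k+1}{2}-\alpha(j+k)}\right)_{j,k=0}^{n}$ is invertible and its inverse is $(\gamma_{j,k})_{j,k=0}^n$ with \[ \gamma_{j,k}=\sum_{m=0}^{n}\frac{(q^{\alpha+1};q)_m\,q^{m(j+k+1)}\,(q^{-m};q)_j\,(q^{-m};q)_k\,q^{\alpha(j+k)+\binom{j+1}{2}+\binom{k+1}{2}}}{(q;q)_m\,(q;q)_j\,(q;q)_k\,(q^{\alpha+1};q)_j\,(q^{\alpha+1};q)_k}. \]
   Context: $(a;q)_m=\prod_{i=0}^{m-1}(1-aq^i)$ for integers $m\ge0$ (empty product $=1$); in particular $(q^{-m};q)_j=0$ for $j>m$. *)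

theory Defs
  imports Complex_Main "Jordan_Normal_Form.Matrix"
begin

definition qpoch :: "real \<Rightarrow> real \<Rightarrow> nat \<Rightarrow> real" where
  "qpoch a q m = (\<Prod>i<m. (1 - a * q ^ i))"

definition momMat :: "real \<Rightarrow> real \<Rightarrow> nat \<Rightarrow> real mat" where
  "momMat q \<alpha> n = mat (n+1) (n+1) (\<lambda>(j,k).
     qpoch (q powr (\<alpha>+1)) q (j+k) *
     q powr (- real ((j+k+1) choose 2) - \<alpha> * real (j+k)))"

definition gammaEntry :: "real \<Rightarrow> real \<Rightarrow> nat \<Rightarrow> nat \<Rightarrow> nat \<Rightarrow> real" where
  "gammaEntry q \<alpha> n j k = (\<Sum>m=0..n.
     (qpoch (q powr (\<alpha>+1)) q m * q ^ (m*(j+k+1)) *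
      qpoch (q powr (- real m)) q j * qpoch (q powr (- real m)) q k *
      q powr (\<alpha> * real (j+k) + real ((j+1) choose 2) + real ((k+1) choose 2)))
     / (qpoch q q m * qpoch q q j * qpoch q q k *
        qpoch (q powr (\<alpha>+1)) q j * qpoch (q powr (\<alpha>+1)) q k))"

definition gammaMat :: "real \<Rightarrow> real \<Rightarrow> nat \<Rightarrow> real mat" where
  "gammaMat q \<alpha> n = mat (n+1) (n+1) (\<lambda>(j,k). gammaEntry q \<alpha> n j k)"

end

theory Submission
  imports Defs "Jordan_Normal_Form.Determinant"
begin

(* The moment matrix M = (mu (j+k)) is the Hankel matrix of the moments
     mu s = (q^(alpha+1);q)_s * q^(-binom(s+1,2) - alpha*s)
   of the little q-Jacobi weight, and gamma is built from the monomial coefficients of the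
   little q-Jacobi polynomials p_m(x) = sum_j V(m,j) x^j with
     V(m,j) = (q^-m;q)_j/(q;q)_j * q^(mj) * q^(alpha*j + binom(j+1,2)) / (q^(alpha+1);q)_j.
   Writing C = diag(c_m), c_m = (q^(alpha+1);q)_m q^m/(q;q)_m, one has gamma = V^T C V, so it
   suffices to prove the orthogonality relation V M V^T C = 1; a one-sided inverse of a
   square matrix is two-sided, which then gives both products and invertibility. *)

section \<open>q-Pochhammer symbols\<close>

lemma qpoch_Suc: "qpoch b q (Suc j) = qpoch b q j * (1 - b * q ^ j)"
  by (simp add: qpoch_def)

lemma qpoch_add: "qpoch b q (j + k) = qpoch b q j * (\<Prod>t<k. 1 - b * q ^ t * q ^ j)"
  by (induction k) (simp_all add: qpoch_Suc power_add mult_ac)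

lemma qpoch_pos:
  assumes "0 \<le> b" "b < 1" "0 < q" "q \<le> 1"
  shows "qpoch b q j > 0"
  unfolding qpoch_def
proof (rule prod_pos)
  fix i assume "i \<in> {..<j}"
  have "q ^ i \<le> 1" using assms by (simp add: power_le_one_iff)
  hence "b * q ^ i \<le> b" using assms by (simp add: mult_left_le)
  thus "0 < 1 - b * q ^ i" using assms by simp
qed

lemma powr_alpha_bounds:
  assumes "0 < q" "q < 1" "(\<alpha>::real) > -1"
  shows "0 < q powr (\<alpha> + 1)" "q powr (\<alpha> + 1) < 1"
  using assms powr_less_mono2[of "\<alpha> + 1" q 1] by auto

lemma qpoch_alpha_pos:
  assumes "0 < q" "q < 1" "(\<alpha>::real) > -1"
  shows "qpoch (q powr (\<alpha> + 1)) q j > 0"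
  using powr_alpha_bounds[OF assms] assms by (intro qpoch_pos) auto

lemma qpoch_q_pos: "0 < q \<Longrightarrow> q < 1 \<Longrightarrow> qpoch q q j > 0"
  by (intro qpoch_pos) auto

text \<open>Reversing the product \<open>(q\<^sup>-\<^sup>l;q)\<^sub>l = \<Prod>\<^sub>i\<^sub><\<^sub>l (1 - q\<^sup>-\<^sup>(\<^sup>i\<^sup>+\<^sup>1\<^sup>))\<close> and pulling out
  \<open>-q\<^sup>-\<^sup>(\<^sup>i\<^sup>+\<^sup>1\<^sup>)\<close> from each factor relates it to \<open>(q;q)\<^sub>l\<close>; we only need the squared form,
  which avoids the sign.\<close>

lemma prod_reciprocal_powers_square:
  assumes "0 < (q::real)"
  shows "(\<Prod>i<l. 1 - 1 / q ^ Suc i)\<^sup>2 * q ^ (l + l * l) = (\<Prod>i<l. 1 - q * q ^ i)\<^sup>2"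
proof (induction l)
  case 0 thus ?case by simp
next
  case (Suc l)
  have e: "Suc l + Suc l * Suc l = (l + l * l) + 2 * Suc l" by simp
  have "(\<Prod>i<Suc l. 1 - 1 / q ^ Suc i)\<^sup>2 * q ^ (Suc l + Suc l * Suc l)
     = ((\<Prod>i<l. 1 - 1 / q ^ Suc i)\<^sup>2 * q ^ (l + l * l)) * ((1 - 1 / q ^ Suc l) * q ^ Suc l)\<^sup>2"
    unfolding e power_add
    by (simp add: power_mult_distrib power_mult power2_eq_square algebra_simps)
  also have "(1 - 1 / q ^ Suc l) * q ^ Suc l = - (1 - q * q ^ l)"
    using assms by (simp add: field_simps)
  finally show ?case unfolding Suc by (simp add: power2_eq_square algebra_simps)
qed

lemma qpoch_reflection_square:
  assumes "0 < q"
  shows "(qpoch (1 / q ^ l) q l)\<^sup>2 * q ^ (l + l * l) = (qpoch q q l)\<^sup>2"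
proof -
  have "qpoch (1 / q ^ l) q l = (\<Prod>i<l. 1 - 1 / q ^ l * q ^ (l - Suc i))"
    unfolding qpoch_def by (rule prod.nat_diff_reindex[symmetric])
  also have "\<dots> = (\<Prod>i<l. 1 - 1 / q ^ Suc i)"
  proof (rule prod.cong)
    fix i assume "i \<in> {..<l}"
    hence "q ^ l = q ^ (l - Suc i) * q ^ Suc i" by (metis power_add le_add_diff_inverse2 Suc_leI lessThan_iff)
    thus "1 - 1 / q ^ l * q ^ (l - Suc i) = 1 - 1 / q ^ Suc i" using assms by (simp add: field_simps)
  qed simp
  finally show ?thesis using prod_reciprocal_powers_square[OF assms, of l] by (simp add: qpoch_def)
qed

section \<open>The terminating q-binomial theorem\<close>

definition qbinom_coeff :: "real \<Rightarrow> nat \<Rightarrow> nat \<Rightarrow> real" where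
  "qbinom_coeff q m j = qpoch (1 / q ^ m) q j / qpoch q q j"

lemma qbinom_coeff_0 [simp]: "qbinom_coeff q m 0 = 1"
  by (simp add: qbinom_coeff_def qpoch_def)

lemma qbinom_coeff_vanish:
  assumes "q \<noteq> 0" "m < j"
  shows "qbinom_coeff q m j = 0"
proof -
  have "qpoch (1 / q ^ m) q j = 0"
    unfolding qpoch_def by (rule prod_zero) (use assms in auto)
  thus ?thesis by (simp add: qbinom_coeff_def)
qed

lemma qbinom_coeff_Suc:
  assumes "0 < q" "q < 1"
  shows "qbinom_coeff q (Suc m) (Suc j) = qbinom_coeff q m (Suc j) - qbinom_coeff q m j / q ^ Suc m"
proof -
  have shift: "qpoch (1 / q ^ Suc m) q (Suc j) = (1 - 1 / q ^ Suc m) * qpoch (1 / q ^ m) q j"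
    unfolding qpoch_def prod.lessThan_Suc_shift using assms by (simp add: field_simps)
  have "qpoch q q j > 0" using assms by (rule qpoch_q_pos)
  moreover have "1 - q * q ^ j > 0"
    using assms power_strict_decreasing[of 0 "Suc j" q] by simp
  ultimately show ?thesis
    unfolding qbinom_coeff_def shift qpoch_Suc[of "1 / q ^ m"] qpoch_Suc[of q]
    using assms by (simp add: field_simps)
qed

theorem terminating_qbinomial:
  assumes "0 < q" "q < 1"
  shows "(\<Sum>j<Suc m. qbinom_coeff q m j * z ^ j) = (\<Prod>t<m. 1 - z * q ^ t / q ^ m)"
proof (induction m)
  case 0 then show ?case by simp
next
  case (Suc m)
  let ?S = "\<Sum>j<Suc m. qbinom_coeff q m j * z ^ j"
  have tail: "(\<Sum>j<Suc m. qbinom_coeff q m (Suc j) * z ^ Suc j) = ?S - 1"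
  proof -
    have "(\<Sum>j<Suc (Suc m). qbinom_coeff q m j * z ^ j)
        = 1 + (\<Sum>j<Suc m. qbinom_coeff q m (Suc j) * z ^ Suc j)"
      by (subst sum.lessThan_Suc_shift) simp
    moreover have "(\<Sum>j<Suc (Suc m). qbinom_coeff q m j * z ^ j) = ?S"
      using qbinom_coeff_vanish[of q m "Suc m"] assms by simp
    ultimately show ?thesis by simp
  qed
  have "(\<Sum>j<Suc (Suc m). qbinom_coeff q (Suc m) j * z ^ j)
      = 1 + (\<Sum>j<Suc m. qbinom_coeff q (Suc m) (Suc j) * z ^ Suc j)"
    by (subst sum.lessThan_Suc_shift) simp
  also have "\<dots> = 1 + (\<Sum>j<Suc m. qbinom_coeff q m (Suc j) * z ^ Suc j) - z / q ^ Suc m * ?S"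
    unfolding qbinom_coeff_Suc[OF assms]
    by (simp add: algebra_simps sum_subtractf sum_distrib_left sum_divide_distrib)
  also have "\<dots> = (1 - z / q ^ Suc m) * ?S" unfolding tail by (simp add: algebra_simps)
  also have "\<dots> = (\<Prod>t<Suc m. 1 - z * q ^ t / q ^ Suc m)"
    unfolding Suc prod.lessThan_Suc_shift using assms by (simp add: field_simps)
  finally show ?case .
qed

definition qbinom_poch_sum :: "real \<Rightarrow> real \<Rightarrow> nat \<Rightarrow> nat \<Rightarrow> nat \<Rightarrow> real" where
  "qbinom_poch_sum q a m r k =
     (\<Sum>j<Suc m. qbinom_coeff q m j * q ^ (r * j) * (\<Prod>t<k. 1 - a * q ^ t * q ^ j))"

lemma qbinom_poch_sum_Suc:
  "qbinom_poch_sum q a m r (Suc k) = qbinom_poch_sum q a m r k - a * q ^ k * qbinom_poch_sum q a m (Suc r) k"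
proof -
  have "\<And>j. q ^ (Suc r * j) = q ^ j * q ^ (r * j)" by (simp add: power_add)
  thus ?thesis
    unfolding qbinom_poch_sum_def prod.lessThan_Suc sum_distrib_left sum_subtractf[symmetric]
    by (intro sum.cong) (simp_all add: algebra_simps)
qed

lemma qbinom_poch_sum_0:
  assumes "0 < q" "q < 1"
  shows "qbinom_poch_sum q a m r 0 = (\<Prod>t<m. 1 - q ^ r * q ^ t / q ^ m)"
  unfolding qbinom_poch_sum_def using terminating_qbinomial[OF assms, of m "q ^ r"]
  by (simp add: power_mult)

lemma qbinom_poch_sum_vanish:
  assumes "0 < q" "q < 1"
  shows "1 \<le> r \<Longrightarrow> r + k \<le> m \<Longrightarrow> qbinom_poch_sum q a m r k = 0"
proof (induction k arbitrary: r)
  case 0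
  (* the factor t = m - r of the q-binomial product is zero *)
  have "q ^ r * q ^ (m - r) = q ^ m" using 0 by (simp add: power_add[symmetric])
  hence "1 - q ^ r * q ^ (m - r) / q ^ m = 0" using assms by simp
  moreover have "m - r \<in> {..<m}" using 0 by auto
  ultimately have "(\<Prod>t<m. 1 - q ^ r * q ^ t / q ^ m) = 0" by (intro prod_zero) blast+
  thus ?case using qbinom_poch_sum_0[OF assms] by simp
next
  case (Suc k)
  thus ?case unfolding qbinom_poch_sum_Suc using Suc.IH[of r] Suc.IH[of "Suc r"] by simp
qed

lemma qbinom_poch_sum_top:
  assumes "0 < q" "q < 1"
  shows "k \<le> m \<Longrightarrow> qbinom_poch_sum q a m 0 k = qpoch (1 / q ^ m) q m"
proof (induction k)
  case 0 thus ?case using qbinom_poch_sum_0[OF assms] by (simp add: qpoch_def)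
next
  case (Suc k)
  thus ?case unfolding qbinom_poch_sum_Suc using qbinom_poch_sum_vanish[OF assms, of 1 k m] by simp
qed

section \<open>Orthogonality of the little q-Jacobi polynomials\<close>

text \<open>The moments, the coefficients \<open>V(m,j)\<close> of \<open>x\<^sup>j\<close> in the \<open>m\<close>-th polynomial and the
  reciprocal squared norms \<open>c\<^sub>m\<close>.\<close>

definition moment :: "real \<Rightarrow> real \<Rightarrow> nat \<Rightarrow> real" where
  "moment q \<alpha> s = qpoch (q powr (\<alpha> + 1)) q s * q powr (- real ((s + 1) choose 2) - \<alpha> * real s)"

definition lqj_coeff :: "real \<Rightarrow> real \<Rightarrow> nat \<Rightarrow> nat \<Rightarrow> real" where
  "lqj_coeff q \<alpha> m j = qbinom_coeff q m j * q ^ (m * j) *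
     q powr (\<alpha> * real j + real (Suc j choose 2)) / qpoch (q powr (\<alpha> + 1)) q j"

definition lqj_norm :: "real \<Rightarrow> real \<Rightarrow> nat \<Rightarrow> real" where
  "lqj_norm q \<alpha> m = qpoch (q powr (\<alpha> + 1)) q m * q ^ m / qpoch q q m"

text \<open>The value of the moment functional on \<open>x\<^sup>j p\<^sub>l\<close>; for \<open>l \<le> n\<close> the range \<open>k \<le> n\<close> covers
  all coefficients of \<open>p\<^sub>l\<close>, since \<open>V(l,k) = 0\<close> for \<open>k > l\<close>.\<close>

definition lqj_pairing :: "real \<Rightarrow> real \<Rightarrow> nat \<Rightarrow> nat \<Rightarrow> nat \<Rightarrow> real" where
  "lqj_pairing q \<alpha> n l j = (\<Sum>k<Suc n. moment q \<alpha> (j + k) * lqj_coeff q \<alpha> l k)"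

lemma lqj_coeff_vanish: "0 < q \<Longrightarrow> l < k \<Longrightarrow> lqj_coeff q \<alpha> l k = 0"
  unfolding lqj_coeff_def using qbinom_coeff_vanish[of q l k] by simp

lemma Suc_add_choose_two: "(Suc (j + k) choose 2) = (Suc j choose 2) + (Suc k choose 2) + j * k"
  by (induction k) (simp_all add: numeral_2_eq_2)

lemma lqj_powers_combine:
  assumes "0 < q" "k \<le> m"
  shows "q ^ (m * j) * q powr (\<alpha> * real j + real (Suc j choose 2)) *
           q powr (- real ((j + k + 1) choose 2) - \<alpha> * real (j + k))
       = q powr (- real (Suc k choose 2) - \<alpha> * real k) * q ^ ((m - k) * j)"
proof -
  have e1: "q ^ (m * j) = q powr (real m * real j)"
    using assms by (simp add: powr_realpow[symmetric])
  have e2: "q ^ ((m - k) * j) = q powr (real m * real j - real k * real j)"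
    using assms by (simp add: powr_realpow[symmetric] of_nat_diff left_diff_distrib)
  have c: "real ((j + k + 1) choose 2) = real (Suc j choose 2) + real (Suc k choose 2) + real j * real k"
    using Suc_add_choose_two[of j k] by simp
  show ?thesis unfolding e1 e2 c powr_add[symmetric] by (simp add: algebra_simps)
qed

lemma lqj_coeff_times_moment:
  assumes "0 < q" "q < 1" "\<alpha> > -1" "k \<le> m"
  shows "lqj_coeff q \<alpha> m j * moment q \<alpha> (j + k) = q powr (- real (Suc k choose 2) - \<alpha> * real k) *
     (qbinom_coeff q m j * q ^ ((m - k) * j) * (\<Prod>t<k. 1 - q powr (\<alpha> + 1) * q ^ t * q ^ j))"
proof -
  have "qpoch (q powr (\<alpha> + 1)) q j > 0" using assms(1-3) by (rule qpoch_alpha_pos)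
  hence "lqj_coeff q \<alpha> m j * moment q \<alpha> (j + k) =
      qbinom_coeff q m j * (\<Prod>t<k. 1 - q powr (\<alpha> + 1) * q ^ t * q ^ j) *
      (q ^ (m * j) * q powr (\<alpha> * real j + real (Suc j choose 2)) *
       q powr (- real ((j + k + 1) choose 2) - \<alpha> * real (j + k)))"
    unfolding lqj_coeff_def moment_def qpoch_add by (simp add: field_simps)
  thus ?thesis unfolding lqj_powers_combine[OF assms(1,4)] by simp
qed

lemma lqj_pairing_eq:
  assumes "0 < q" "q < 1" "\<alpha> > -1" "l \<le> n" "j \<le> l"
  shows "lqj_pairing q \<alpha> n l j =
    q powr (- real (Suc j choose 2) - \<alpha> * real j) * qbinom_poch_sum q (q powr (\<alpha> + 1)) l (l - j) j"
proof -
  have "lqj_pairing q \<alpha> n l j = (\<Sum>k<Suc l. moment q \<alpha> (j + k) * lqj_coeff q \<alpha> l k)"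
    unfolding lqj_pairing_def
    by (rule sum.mono_neutral_right) (use assms lqj_coeff_vanish in auto)
  also have "\<dots> = (\<Sum>k<Suc l. q powr (- real (Suc j choose 2) - \<alpha> * real j) *
     (qbinom_coeff q l k * q ^ ((l - j) * k) * (\<Prod>t<j. 1 - q powr (\<alpha> + 1) * q ^ t * q ^ k)))"
    by (rule sum.cong)
      (use lqj_coeff_times_moment[OF assms(1-3,5)] in \<open>auto simp: add.commute mult.commute\<close>)
  finally show ?thesis unfolding qbinom_poch_sum_def sum_distrib_left by (simp add: mult_ac)
qed

lemma lqj_pairing_vanish:
  assumes "0 < q" "q < 1" "\<alpha> > -1" "l \<le> n" "j < l"
  shows "lqj_pairing q \<alpha> n l j = 0"
  using lqj_pairing_eq[OF assms(1-4), of j] qbinom_poch_sum_vanish[OF assms(1,2), of "l - j" j l] assms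
  by simp

lemma lqj_gram_symmetric:
  "(\<Sum>j<Suc n. lqj_coeff q \<alpha> m j * lqj_pairing q \<alpha> n l j) =
   (\<Sum>j<Suc n. lqj_coeff q \<alpha> l j * lqj_pairing q \<alpha> n m j)"
  unfolding lqj_pairing_def sum_distrib_left
  by (subst sum.swap) (simp add: add.commute mult_ac)

lemma lqj_gram_lower:
  assumes "0 < q" "q < 1" "\<alpha> > -1" "m \<le> l" "l \<le> n"
  shows "(\<Sum>j<Suc n. lqj_coeff q \<alpha> m j * lqj_pairing q \<alpha> n l j) =
         (if m = l then lqj_coeff q \<alpha> l l * lqj_pairing q \<alpha> n l l else 0)"
proof -
  have summand: "lqj_coeff q \<alpha> m j * lqj_pairing q \<alpha> n l j =
        (if j = l then lqj_coeff q \<alpha> m l * lqj_pairing q \<alpha> n l l else 0)" for j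
  proof (cases j l rule: linorder_cases)
    case less thus ?thesis using lqj_pairing_vanish[OF assms(1-3,5) less] by simp
  next
    case greater thus ?thesis using lqj_coeff_vanish[OF assms(1), of m j] assms(4) by simp
  qed simp
  have "(\<Sum>j<Suc n. lqj_coeff q \<alpha> m j * lqj_pairing q \<alpha> n l j) =
         (\<Sum>j<Suc n. if j = l then lqj_coeff q \<alpha> m l * lqj_pairing q \<alpha> n l l else 0)"
    by (rule sum.cong[OF refl summand])
  also have "\<dots> = lqj_coeff q \<alpha> m l * lqj_pairing q \<alpha> n l l"
    using assms(5) by (simp del: sum.lessThan_Suc)
  finally show ?thesis using lqj_coeff_vanish[OF assms(1), of m l] assms(4) by auto
qed

lemma lqj_gram_diag:
  assumes "0 < q" "q < 1" "\<alpha> > -1" "l \<le> n"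
  shows "lqj_norm q \<alpha> l * (lqj_coeff q \<alpha> l l * lqj_pairing q \<alpha> n l l) = 1"
proof -
  have P: "qpoch (q powr (\<alpha> + 1)) q l > 0" using assms(1-3) by (rule qpoch_alpha_pos)
  have Q: "qpoch q q l > 0" using assms(1,2) by (rule qpoch_q_pos)
  have pairing: "lqj_pairing q \<alpha> n l l =
      q powr (- real (Suc l choose 2) - \<alpha> * real l) * qpoch (1 / q ^ l) q l"
    using lqj_pairing_eq[OF assms, of l] qbinom_poch_sum_top[OF assms(1,2), of l l] by simp
  have cancel: "q powr (\<alpha> * real l + real (Suc l choose 2)) *
                q powr (- real (Suc l choose 2) - \<alpha> * real l) = 1"
    unfolding powr_add[symmetric] using assms by simp
  have "lqj_norm q \<alpha> l * (lqj_coeff q \<alpha> l l * lqj_pairing q \<alpha> n l l) =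
     (qpoch (1 / q ^ l) q l)\<^sup>2 * q ^ (l + l * l) / (qpoch q q l)\<^sup>2 *
     (q powr (\<alpha> * real l + real (Suc l choose 2)) * q powr (- real (Suc l choose 2) - \<alpha> * real l))"
    unfolding lqj_norm_def lqj_coeff_def pairing qbinom_coeff_def
    using P Q by (simp add: field_simps power2_eq_square power_add)
  also have "\<dots> = 1" unfolding cancel qpoch_reflection_square[OF assms(1)] using Q by simp
  finally show ?thesis .
qed

theorem lqj_orthonormality:
  assumes "0 < q" "q < 1" "\<alpha> > -1" "m \<le> n" "l \<le> n"
  shows "lqj_norm q \<alpha> l * (\<Sum>j<Suc n. lqj_coeff q \<alpha> m j * lqj_pairing q \<alpha> n l j) =
         (if m = l then 1 else 0)"
proof (cases "m \<le> l")
  case True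
  thus ?thesis using lqj_gram_lower[OF assms(1-3) True assms(5)] lqj_gram_diag[OF assms(1-3,5)] by simp
next
  case False
  hence "l \<le> m" "m \<noteq> l" by auto
  thus ?thesis
    using lqj_gram_symmetric[where q=q and \<alpha>=\<alpha> and n=n and m=m and l=l] lqj_gram_lower[OF assms(1-3) \<open>l \<le> m\<close> assms(4)]
    by (simp del: sum.lessThan_Suc)
qed

definition coeffMat :: "real \<Rightarrow> real \<Rightarrow> nat \<Rightarrow> real mat" where
  "coeffMat q \<alpha> n = mat (n + 1) (n + 1) (\<lambda>(m, j). lqj_coeff q \<alpha> m j)"

definition normCoeffMat :: "real \<Rightarrow> real \<Rightarrow> nat \<Rightarrow> real mat" where
  "normCoeffMat q \<alpha> n = mat (n + 1) (n + 1) (\<lambda>(m, j). lqj_norm q \<alpha> m * lqj_coeff q \<alpha> m j)"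

lemma gammaEntry_summand:
  assumes "0 < q" "q < 1" "\<alpha> > -1"
  shows "(qpoch (q powr (\<alpha> + 1)) q m * q ^ (m * (j + k + 1)) *
      qpoch (q powr (- real m)) q j * qpoch (q powr (- real m)) q k *
      q powr (\<alpha> * real (j + k) + real ((j + 1) choose 2) + real ((k + 1) choose 2)))
     / (qpoch q q m * qpoch q q j * qpoch q q k *
        qpoch (q powr (\<alpha> + 1)) q j * qpoch (q powr (\<alpha> + 1)) q k)
   = lqj_norm q \<alpha> m * lqj_coeff q \<alpha> m j * lqj_coeff q \<alpha> m k"
proof -
  have "qpoch (q powr (\<alpha> + 1)) q j > 0" "qpoch (q powr (\<alpha> + 1)) q k > 0"
    using assms by (auto intro: qpoch_alpha_pos)
  moreover have "qpoch q q m > 0" "qpoch q q j > 0" "qpoch q q k > 0"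
    using assms by (auto intro: qpoch_q_pos)
  moreover have "q powr (- real m) = 1 / q ^ m"
    using assms by (simp add: powr_minus_divide powr_realpow)
  moreover have "q powr (\<alpha> * real (j + k) + real ((j + 1) choose 2) + real ((k + 1) choose 2)) =
     q powr (\<alpha> * real j + real (Suc j choose 2)) * q powr (\<alpha> * real k + real (Suc k choose 2))"
    unfolding powr_add[symmetric] by (simp add: algebra_simps)
  moreover have "q ^ (m * (j + k + 1)) = q ^ m * q ^ (m * j) * q ^ (m * k)"
    by (simp add: power_add[symmetric] algebra_simps)
  ultimately show ?thesis unfolding lqj_norm_def lqj_coeff_def qbinom_coeff_def
    by (simp add: field_simps)
qed

lemma gammaMat_factorization:
  assumes "0 < q" "q < 1" "\<alpha> > -1"
  shows "gammaMat q \<alpha> n = transpose_mat (normCoeffMat q \<alpha> n) * coeffMat q \<alpha> n"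
proof (rule eq_matI)
  fix j k assume "j < dim_row (transpose_mat (normCoeffMat q \<alpha> n) * coeffMat q \<alpha> n)"
    "k < dim_col (transpose_mat (normCoeffMat q \<alpha> n) * coeffMat q \<alpha> n)"
  hence jk: "j < n + 1" "k < n + 1" by (auto simp: coeffMat_def normCoeffMat_def)
  have "(transpose_mat (normCoeffMat q \<alpha> n) * coeffMat q \<alpha> n) $$ (j, k) =
      (\<Sum>m<Suc n. lqj_norm q \<alpha> m * lqj_coeff q \<alpha> m j * lqj_coeff q \<alpha> m k)"
    using jk by (simp add: coeffMat_def normCoeffMat_def scalar_prod_def lessThan_atLeast0)
  also have "\<dots> = gammaEntry q \<alpha> n j k"
    unfolding gammaEntry_def gammaEntry_summand[OF assms]
    by (simp add: atLeast0AtMost lessThan_Suc_atMost)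
  finally show "gammaMat q \<alpha> n $$ (j, k) =
      (transpose_mat (normCoeffMat q \<alpha> n) * coeffMat q \<alpha> n) $$ (j, k)"
    using jk by (simp add: gammaMat_def)
qed (auto simp: gammaMat_def coeffMat_def normCoeffMat_def)

lemma coeff_moment_orthogonality:
  assumes "0 < q" "q < 1" "\<alpha> > -1"
  shows "coeffMat q \<alpha> n * (momMat q \<alpha> n * transpose_mat (normCoeffMat q \<alpha> n)) = 1\<^sub>m (n + 1)"
proof (rule eq_matI)
  fix m l assume "m < dim_row (1\<^sub>m (n + 1))" "l < dim_col (1\<^sub>m (n + 1))"
  hence ml: "m \<le> n" "l \<le> n" by auto
  have "(coeffMat q \<alpha> n * (momMat q \<alpha> n * transpose_mat (normCoeffMat q \<alpha> n))) $$ (m, l) =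
      (\<Sum>j<Suc n. lqj_coeff q \<alpha> m j *
         (\<Sum>k<Suc n. moment q \<alpha> (j + k) * (lqj_norm q \<alpha> l * lqj_coeff q \<alpha> l k)))"
    using ml by (simp add: coeffMat_def normCoeffMat_def momMat_def moment_def scalar_prod_def
        lessThan_atLeast0 less_Suc_eq_le)
  also have "\<dots> = lqj_norm q \<alpha> l * (\<Sum>j<Suc n. lqj_coeff q \<alpha> m j * lqj_pairing q \<alpha> n l j)"
    unfolding lqj_pairing_def sum_distrib_left by (simp add: mult_ac)
  also have "\<dots> = 1\<^sub>m (n + 1) $$ (m, l)" using lqj_orthonormality[OF assms ml] ml by simp
  finally show "(coeffMat q \<alpha> n * (momMat q \<alpha> n * transpose_mat (normCoeffMat q \<alpha> n))) $$ (m, l) =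
      1\<^sub>m (n + 1) $$ (m, l)" .
qed (auto simp: coeffMat_def normCoeffMat_def)

lemma inverse_from_triple_product:
  fixes A B C :: "'a :: field mat"
  assumes A: "A \<in> carrier_mat n n" and B: "B \<in> carrier_mat n n" and C: "C \<in> carrier_mat n n"
    and ABC: "A * (B * C) = 1\<^sub>m n"
  shows "invertible_mat B \<and> B * (C * A) = 1\<^sub>m n \<and> (C * A) * B = 1\<^sub>m n"
proof -
  have "(B * C) * A = 1\<^sub>m n" by (rule mat_mult_left_right_inverse[OF A _ ABC]) (use B C in simp)
  hence right: "B * (C * A) = 1\<^sub>m n" using assoc_mult_mat[OF B C A] by simp
  have CA: "C * A \<in> carrier_mat n n" using C A by simp
  have left: "(C * A) * B = 1\<^sub>m n" by (rule mat_mult_left_right_inverse[OF B CA right])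
  have "invertible_mat B"
    unfolding invertible_mat_def inverts_mat_def using B CA right left by auto
  with right left show ?thesis by simp
qed

theorem mainTheorem9:
  fixes q \<alpha> :: real and n :: nat
  assumes "0 < q" "q < 1" "\<alpha> > -1"
  shows "invertible_mat (momMat q \<alpha> n) \<and>
         momMat q \<alpha> n * gammaMat q \<alpha> n = 1\<^sub>m (n+1) \<and>
         gammaMat q \<alpha> n * momMat q \<alpha> n = 1\<^sub>m (n+1)"
proof -
  have "coeffMat q \<alpha> n \<in> carrier_mat (n+1) (n+1)"
       "momMat q \<alpha> n \<in> carrier_mat (n+1) (n+1)"
       "transpose_mat (normCoeffMat q \<alpha> n) \<in> carrier_mat (n+1) (n+1)"
    by (auto simp: coeffMat_def momMat_def normCoeffMat_def)
  from inverse_from_triple_product[OF this coeff_moment_orthogonality[OF assms]]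
  show ?thesis unfolding gammaMat_factorization[OF assms] .
qed

end
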